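(* Let $G$ be a strongly connected directed multigraph with a designated set of ordinary vertices such that every two distinct ordinary vertices are $(k+1)$-edge-connected, and let $s$ be a fixed ordinary vertex. Let $u$ and $w$ be two ordinary vertices that are not $(k+2)$-edge-connected. Then either $M(u)\neq M(w)$, or $M_R(u)\neq M_R(w)$.
   Context: For a vertex set $S$, $\mathit{out}(S)$ is the number of edges leaving $S$; $S$ is a $j$-out set if $\mathit{out}(S)=j$. For vertices $x,y$, $\lambda(x,y)$ is the minimum of $\mathit{out}(S)$ over vertex sets $S$ with $x\in S$, $y\notin S$. Two vertices $x,y$ are $j$-edge-connected if $\lambda(x,y)\ge j$ and $\lambda(y,x)\ge j$. For a vertex $v$ with $\lambda(v,s)\ge k+1$: if there is a $(k+1)$-out set $S$ with $v\in S$, $s\notin S$, then $M(v)$ denotes the inclusion-wise minimum such $(k+1)$-out set (it exists); otherwise $M(v)=\bot$. $M_R(v)$ denotes the same notion defined in the reverse graph $G^R$ (all edges reversed). *)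

theory Defs
  imports Main "HOL-Library.Multiset"
begin

definition multigraph :: "'a set \<Rightarrow> ('a \<times> 'a) multiset \<Rightarrow> bool" where
  "multigraph V E \<longleftrightarrow> finite V \<and> (\<forall>e \<in># E. fst e \<in> V \<and> snd e \<in> V)"

definition strongly_connected :: "'a set \<Rightarrow> ('a \<times> 'a) multiset \<Rightarrow> bool" where
  "strongly_connected V E \<longleftrightarrow> (\<forall>x\<in>V. \<forall>y\<in>V. (x, y) \<in> (set_mset E)\<^sup>*)"

definition rev_edges :: "('a \<times> 'a) multiset \<Rightarrow> ('a \<times> 'a) multiset" where
  "rev_edges E = image_mset prod.swap E"

definition out :: "('a \<times> 'a) multiset \<Rightarrow> 'a set \<Rightarrow> nat" where
  "out E S = size (filter_mset (\<lambda>e. fst e \<in> S \<and> snd e \<notin> S) E)"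

definition lam :: "'a set \<Rightarrow> ('a \<times> 'a) multiset \<Rightarrow> 'a \<Rightarrow> 'a \<Rightarrow> nat" where
  "lam V E x y = Min (out E ` {S. S \<subseteq> V \<and> x \<in> S \<and> y \<notin> S})"

definition edge_connected :: "'a set \<Rightarrow> ('a \<times> 'a) multiset \<Rightarrow> nat \<Rightarrow> 'a \<Rightarrow> 'a \<Rightarrow> bool" where
  "edge_connected V E j x y \<longleftrightarrow> lam V E x y \<ge> j \<and> lam V E y x \<ge> j"

definition sep_out_set :: "'a set \<Rightarrow> ('a \<times> 'a) multiset \<Rightarrow> nat \<Rightarrow> 'a \<Rightarrow> 'a \<Rightarrow> 'a set \<Rightarrow> bool" where
  "sep_out_set V E j s v S \<longleftrightarrow> S \<subseteq> V \<and> v \<in> S \<and> s \<notin> S \<and> out E S = j"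

text \<open>M(v): the inclusion-wise minimum (k+1)-out set containing v and not s,
  if some (k+1)-out set with v in S and s not in S exists; None represents bottom.\<close>
definition Mset :: "'a set \<Rightarrow> ('a \<times> 'a) multiset \<Rightarrow> nat \<Rightarrow> 'a \<Rightarrow> 'a \<Rightarrow> 'a set option" where
  "Mset V E k s v =
     (if \<exists>S. sep_out_set V E (k+1) s v S
      then Some (THE S. sep_out_set V E (k+1) s v S \<and>
                        (\<forall>T. sep_out_set V E (k+1) s v T \<longrightarrow> S \<subseteq> T))
      else None)"

definition Mset_R :: "'a set \<Rightarrow> ('a \<times> 'a) multiset \<Rightarrow> nat \<Rightarrow> 'a \<Rightarrow> 'a \<Rightarrow> 'a set option" where
  "Mset_R V E k s v = Mset V (rev_edges E) k s v"

end

theory Submission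
  imports Defs
begin

text \<open>Since u and w are not (k+2)-edge-connected, one of them, say a, is separated from the
  other, b, by a (k+1)-out set S. Cuts of value k+1 around a vertex v with s outside are
  minimum cuts, so by submodularity of out they are closed under intersection, and M(v) is
  their intersection. If s is not in S, then M(a) is contained in S and misses b, while M(b),
  if defined, contains b. If s is in S, the complement of S is a (k+1)-out set of the reverse
  graph around b, and the same argument separates M_R(b) from M_R(a).\<close>

lemma out_add_mset [simp]:
  "out (add_mset e E) S = out E S + (if fst e \<in> S \<and> snd e \<notin> S then 1 else 0)"
  by (simp add: out_def)

lemma out_Int_Un_le: "out E (A \<inter> B) + out E (A \<union> B) \<le> out E A + out E B"
  by (induction E) (auto simp: out_def)

lemma out_rev_edges:
  assumes "\<forall>e\<in>#E. fst e \<in> V \<and> snd e \<in> V" and "S \<subseteq> V"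
  shows "out (rev_edges E) S = out E (V - S)"
  using assms(1)
proof (induction E)
  case empty
  then show ?case by (simp add: out_def rev_edges_def)
next
  case (add e E)
  then show ?case using assms(2) by (cases e) (auto simp: rev_edges_def)
qed

lemma finite_separating_sets:
  "finite V \<Longrightarrow> finite {S. S \<subseteq> V \<and> x \<in> S \<and> y \<notin> S}"
  by (rule finite_subset[of _ "Pow V"]) auto

lemma lam_le_out:
  assumes "finite V" "S \<subseteq> V" "x \<in> S" "y \<notin> S"
  shows "lam V E x y \<le> out E S"
  unfolding lam_def using assms finite_separating_sets[OF assms(1)] by (intro Min_le) auto

lemma lam_attained:
  assumes "finite V" "x \<in> V" "x \<noteq> y"
  obtains S where "S \<subseteq> V" "x \<in> S" "y \<notin> S" "out E S = lam V E x y"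
proof -
  have "{x} \<in> {S. S \<subseteq> V \<and> x \<in> S \<and> y \<notin> S}" using assms by auto
  then have "lam V E x y \<in> out E ` {S. S \<subseteq> V \<and> x \<in> S \<and> y \<notin> S}"
    unfolding lam_def using finite_separating_sets[OF assms(1)] by (intro Min_in) auto
  then obtain S where "S \<subseteq> V" "x \<in> S" "y \<notin> S" "lam V E x y = out E S" by blast
  then show ?thesis using that by simp
qed

text \<open>Unlike j \<le> lam V E x y, this holds vacuously for x = y, where lam is the Min of
  the empty set.\<close>

definition lam_at_least :: "'a set \<Rightarrow> ('a \<times> 'a) multiset \<Rightarrow> nat \<Rightarrow> 'a \<Rightarrow> 'a \<Rightarrow> bool" where
  "lam_at_least V E j x y \<longleftrightarrow> (\<forall>S. S \<subseteq> V \<longrightarrow> x \<in> S \<longrightarrow> y \<notin> S \<longrightarrow> j \<le> out E S)"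

lemma lam_at_leastI:
  "finite V \<Longrightarrow> j \<le> lam V E x y \<Longrightarrow> lam_at_least V E j x y"
  unfolding lam_at_least_def using lam_le_out by (metis le_trans)

lemma edge_connected_lam_at_least:
  assumes "finite V" "edge_connected V E j x y"
  shows "lam_at_least V E j x y" "lam_at_least V E j y x"
  using assms(2) lam_at_leastI[OF assms(1)] unfolding edge_connected_def by simp_all

lemma lam_at_least_rev_edges:
  assumes "\<forall>e\<in>#E. fst e \<in> V \<and> snd e \<in> V" and "y \<in> V" and "lam_at_least V E j y x"
  shows "lam_at_least V (rev_edges E) j x y"
  unfolding lam_at_least_def
proof (intro allI impI)
  fix S assume "S \<subseteq> V" "x \<in> S" "y \<notin> S"
  then have "j \<le> out E (V - S)"
    using assms(2,3) unfolding lam_at_least_def by blast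
  then show "j \<le> out (rev_edges E) S" using out_rev_edges[OF assms(1) \<open>S \<subseteq> V\<close>] by simp
qed

lemma sep_out_set_Int:
  assumes "lam_at_least V E (k+1) v s"
    and "sep_out_set V E (k+1) s v A" and "sep_out_set V E (k+1) s v B"
  shows "sep_out_set V E (k+1) s v (A \<inter> B)"
proof -
  have A: "A \<subseteq> V" "v \<in> A" "s \<notin> A" "out E A = k+1"
    using assms(2) unfolding sep_out_set_def by blast+
  have B: "B \<subseteq> V" "v \<in> B" "s \<notin> B" "out E B = k+1"
    using assms(3) unfolding sep_out_set_def by blast+
  note cut_bound = assms(1)[unfolded lam_at_least_def, rule_format]
  have "k+1 \<le> out E (A \<inter> B)" using cut_bound[of "A \<inter> B"] A B by blast
  moreover have "k+1 \<le> out E (A \<union> B)" using cut_bound[of "A \<union> B"] A B by blast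
  ultimately have "out E (A \<inter> B) = k+1"
    using out_Int_Un_le[of E A B] A(4) B(4) by linarith
  then show ?thesis using A B unfolding sep_out_set_def by blast
qed

lemma Mset_least:
  assumes "finite V" "lam_at_least V E (k+1) v s" "sep_out_set V E (k+1) s v S"
  obtains X where "Mset V E k s v = Some X" "sep_out_set V E (k+1) s v X" "X \<subseteq> S"
proof -
  define F where "F = {T. sep_out_set V E (k+1) s v T}"
  have "finite F"
    unfolding F_def sep_out_set_def by (rule finite_subset[of _ "Pow V"]) (use assms(1) in auto)
  have "\<Inter>G \<in> F" if "finite G" "G \<noteq> {}" "G \<subseteq> F" for G
    using that
  proof (induction G rule: finite_ne_induct)
    case (insert T G)
    then show ?case using sep_out_set_Int[OF assms(2)] by (simp add: F_def)
  qed simp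
  then have "\<Inter>F \<in> F" using \<open>finite F\<close> assms(3) by (auto simp: F_def)
  have "(THE X. X \<in> F \<and> (\<forall>T \<in> F. X \<subseteq> T)) = \<Inter>F"
    using \<open>\<Inter>F \<in> F\<close> by (intro the_equality) (auto intro!: subset_antisym)
  then have "Mset V E k s v = Some (\<Inter>F)"
    unfolding Mset_def using assms(3) by (auto simp: F_def)
  then show ?thesis using that \<open>\<Inter>F \<in> F\<close> assms(3) by (auto simp: F_def)
qed

lemma Mset_SomeD:
  assumes "finite V" "lam_at_least V E (k+1) v s" "Mset V E k s v = Some X"
  shows "v \<in> X"
proof -
  obtain S where "sep_out_set V E (k+1) s v S"
    using assms(3) unfolding Mset_def by (auto split: if_splits)
  then obtain Y where "Mset V E k s v = Some Y" "sep_out_set V E (k+1) s v Y"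
    using Mset_least[OF assms(1,2)] by blast
  then show ?thesis using assms(3) by (simp add: sep_out_set_def)
qed

lemma Mset_differ_if_separated:
  assumes "finite V" "lam_at_least V E (k+1) a s" "lam_at_least V E (k+1) b s"
    and "sep_out_set V E (k+1) s a S" "b \<notin> S"
  shows "Mset V E k s a \<noteq> Mset V E k s b"
proof
  obtain X where "Mset V E k s a = Some X" "X \<subseteq> S"
    using Mset_least[OF assms(1,2,4)] by blast
  moreover assume "Mset V E k s a = Mset V E k s b"
  ultimately have "b \<in> X" using Mset_SomeD[OF assms(1,3)] by simp
  then show False using \<open>X \<subseteq> S\<close> assms(5) by blast
qed

lemma Mset_or_Mset_R_differ:
  assumes "multigraph V E"
    and "lam_at_least V E (k+1) a s" "lam_at_least V E (k+1) s a"
    and "lam_at_least V E (k+1) b s" "lam_at_least V E (k+1) s b"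
    and "b \<in> V" "S \<subseteq> V" "a \<in> S" "b \<notin> S" "out E S = k+1"
  shows "Mset V E k s a \<noteq> Mset V E k s b \<or> Mset_R V E k s a \<noteq> Mset_R V E k s b"
proof -
  have edges: "\<forall>e\<in>#E. fst e \<in> V \<and> snd e \<in> V" and "finite V"
    using assms(1) unfolding multigraph_def by blast+
  show ?thesis
  proof (cases "s \<in> S")
    case False
    then have "sep_out_set V E (k+1) s a S"
      using assms(7,8,10) unfolding sep_out_set_def by blast
    then show ?thesis
      using Mset_differ_if_separated[OF \<open>finite V\<close> assms(2,4) _ assms(9)] by blast
  next
    case True
    then have "s \<in> V" using assms(7) by blast
    have "out (rev_edges E) (V - S) = k+1"
      using out_rev_edges[OF edges, of "V - S"] assms(7,10) by (simp add: double_diff)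
    then have "sep_out_set V (rev_edges E) (k+1) s b (V - S)"
      using True assms(6,9) unfolding sep_out_set_def by blast
    moreover have "a \<notin> V - S" using assms(8) by blast
    ultimately have "Mset V (rev_edges E) k s b \<noteq> Mset V (rev_edges E) k s a"
      using Mset_differ_if_separated[OF \<open>finite V\<close>]
        lam_at_least_rev_edges[OF edges \<open>s \<in> V\<close>] assms(3,5) by blast
    then show ?thesis unfolding Mset_R_def by simp
  qed
qed

theorem mainTheorem3:
  fixes V :: "'a set" and E :: "('a \<times> 'a) multiset" and Ord :: "'a set"
    and k :: nat and s u w :: 'a
  assumes "multigraph V E"
    and "strongly_connected V E"
    and "Ord \<subseteq> V"
    and "\<forall>x\<in>Ord. \<forall>y\<in>Ord. x \<noteq> y \<longrightarrow> edge_connected V E (k+1) x y"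
    and "s \<in> Ord"
    and "u \<in> Ord" and "w \<in> Ord" and "u \<noteq> w"
    and "\<not> edge_connected V E (k+2) u w"
  shows "Mset V E k s u \<noteq> Mset V E k s w \<or> Mset_R V E k s u \<noteq> Mset_R V E k s w"
proof -
  have "finite V" using assms(1) unfolding multigraph_def by blast
  have cut_bounds: "lam_at_least V E (k+1) v s \<and> lam_at_least V E (k+1) s v"
    if "v \<in> Ord" for v
  proof (cases "v = s")
    case False
    then show ?thesis
      using edge_connected_lam_at_least[OF \<open>finite V\<close> assms(4)[rule_format, OF that assms(5)]]
      by blast
  qed (simp add: lam_at_least_def)
  have differ: "Mset V E k s a \<noteq> Mset V E k s b \<or> Mset_R V E k s a \<noteq> Mset_R V E k s b"
    if ab: "a \<in> Ord" "b \<in> Ord" "a \<noteq> b" "lam V E a b \<le> k+1" for a b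
  proof -
    have "a \<in> V" "b \<in> V" using ab(1,2) assms(3) by blast+
    obtain S where S: "S \<subseteq> V" "a \<in> S" "b \<notin> S" "out E S = lam V E a b"
      by (rule lam_attained[OF \<open>finite V\<close> \<open>a \<in> V\<close> ab(3)])
    have "k+1 \<le> lam V E a b"
      using assms(4)[rule_format, OF ab(1-3)] unfolding edge_connected_def by simp
    then have "out E S = k+1" using S(4) ab(4) by linarith
    then show ?thesis
      using cut_bounds[OF ab(1)] cut_bounds[OF ab(2)]
        Mset_or_Mset_R_differ[OF assms(1) _ _ _ _ \<open>b \<in> V\<close> S(1-3)]
      by blast
  qed
  have "lam V E u w \<le> k+1 \<or> lam V E w u \<le> k+1"
    using assms(9) unfolding edge_connected_def by linarith
  then show ?thesis
    using differ[OF assms(6-8)] differ[OF assms(7,6) assms(8)[symmetric]] by (metis eq_commute)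
qed

end
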